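(* Let $w(x)=\frac{2}{1+x^2}$, let $0<s<\tfrac12$, $\tau_s=\left(\frac{\Gamma(1-2s)\sin(s\pi)}{\pi}\int_{\mathbb{R}}w^2\right)^{-1}$, $G(x)=\frac{\Gamma(1-2s)\sin(s\pi)}{\pi}|x|^{2s-1}$, $v_w(x)=\tau_s\int_{\mathbb{R}}w^2(y)G(x-y)\,dy$, and $S(w)=-(-\Delta)^{1/2}w-w+\frac{w^2}{v_w}=\frac{w^2}{v_w}-w^2$. Let $\|\phi\|_*=\sup_{x\in\mathbb{R}}(1+|x|)^{2}|\phi(x)|$. Then for every small $\delta>0$ there is a constant $C$, independent of $s$, such that if $1-2s$ is sufficiently small, \[ \|S(w)\|_*\le C(1-2s)^{1-\delta}. \]
   Context: $w$ is the unique positive even decaying solution of $(-\Delta)^{1/2}w+w-w^2=0$ on $\mathbb{R}$, where $(-\Delta)^{1/2}$ is the Fourier multiplier $|\xi|$. $v_w$ is the solution of $(-\Delta)^sv_w=\tau_sw^2$ on $\mathbb{R}$ vanishing at infinity. The norm is the weighted norm $\|\phi\|_*=\|\rho^{-1}\phi\|_{L^\infty}$ with $\rho(x)=(1+|x|)^{-\mu}$ and weight exponent $\mu=2$. *)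

theory Defs
  imports "HOL-Analysis.Analysis"
begin

definition w0 :: "real \<Rightarrow> real" where
  "w0 x = 2 / (1 + x\<^sup>2)"

definition cG :: "real \<Rightarrow> real" where
  "cG s = Gamma (1 - 2 * s) * sin (s * pi) / pi"

definition tau :: "real \<Rightarrow> real" where
  "tau s = inverse (cG s * (LINT y|lborel. (w0 y)\<^sup>2))"

definition Gker :: "real \<Rightarrow> real \<Rightarrow> real" where
  "Gker s x = cG s * \<bar>x\<bar> powr (2 * s - 1)"

definition v_w :: "real \<Rightarrow> real \<Rightarrow> real" where
  "v_w s x = tau s * (LINT y|lborel. (w0 y)\<^sup>2 * Gker s (x - y))"

definition Sw :: "real \<Rightarrow> real \<Rightarrow> real" where
  "Sw s x = (w0 x)\<^sup>2 / v_w s x - (w0 x)\<^sup>2"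

end

theory Submission
  imports Defs "HOL-Probability.Sinc_Integral"
begin

(*
  Since tau_s cancels the constant of G, v_w is the Riesz potential
  J(x) = int w(y)^2 |x - y|^(-eps) dy divided by int w^2, where eps = 1 - 2s, so that
  S(w) = w^2 (int w^2 - J) / J.  The elementary bound |1 - a^(-eps)| <= eps (4 a^(-3/4) + a)
  gives |int w^2 - J(x)| <= K eps (1 + |x|), while J(x) >= (1 + |x|)^(-eps) because w^2 >= 1
  on [0, 1].  Since (1 + |x|)^4 w(x)^2 <= 16, this yields ||S(w)||_* = O(1 - 2s), which is
  stronger than the claimed bound.
*)

lemma integrable_inverse_one_plus_square: "integrable lborel (\<lambda>x::real. inverse (1 + x^2))"
  using integrable_inverse_1_plus_square by (simp add: set_integrable_def einterval_def)

lemma integrable_abs_powr_on_unit_interval: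
  fixes p :: real
  assumes "-1 < p"
  shows "integrable lborel (\<lambda>t::real. indicator {-1..1} t * \<bar>t\<bar> powr p)"
proof -
  have "(\<lambda>t::real. t powr p) absolutely_integrable_on {0<..1}"
    using assms by (intro nonnegative_absolutely_integrable_1 integrable_on_powr_from_0') auto
  then have "integrable lebesgue (\<lambda>t::real. indicator {0<..1} t * t powr p)"
    by (simp add: set_integrable_def)
  then have right: "integrable lborel (\<lambda>t::real. indicator {0<..1} t * t powr p)"
    by (subst (asm) integrable_completion) auto
  have left: "integrable lborel (\<lambda>t::real. indicator {0<..1} (-t) * (-t) powr p)"
    using lborel_integrable_real_affine[OF right, of "-1" 0] by simp
  have "indicator {-1..1} t * \<bar>t\<bar> powr p
      = indicator {0<..1} t * t powr p + indicator {0<..1} (-t) * (-t) powr p" for t :: real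
    by (auto simp: indicator_def abs_if)
  then show ?thesis
    using Bochner_Integration.integrable_add[OF right left] by simp
qed

lemma integrable_shifted_abs_powr_on_unit_interval:
  fixes p x :: real
  assumes "-1 < p"
  shows "integrable lborel (\<lambda>y. indicator {-1..1} (x - y) * \<bar>x - y\<bar> powr p)"
  using lborel_integrable_real_affine[OF integrable_abs_powr_on_unit_interval[OF assms], of "-1" x]
  by simp

lemma integral_shifted_abs_powr_on_unit_interval:
  fixes p x :: real
  shows "(LINT y|lborel. indicator {-1..1} (x - y) * \<bar>x - y\<bar> powr p)
       = (LINT t|lborel. indicator {-1..1} t * \<bar>t\<bar> powr p)"
  using lborel_integral_real_affine[of "-1" "\<lambda>t. indicator {-1..1} t * \<bar>t\<bar> powr p" x] by simp

(* Since 0 powr p = 0, the integrand vanishes at the singularity y = x. *)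
definition riesz_potential :: "(real \<Rightarrow> real) \<Rightarrow> real \<Rightarrow> real \<Rightarrow> real" where
  "riesz_potential g p x = (LINT y|lborel. g y * \<bar>x - y\<bar> powr p)"

(* For a >= 1: 1 - a^(-e) <= e ln a <= e a.  For a < 1: a^(-e) - 1 <= e ln(1/a) a^(-e),
   with ln(1/a) <= 4 a^(-1/4) and a^(-e) <= a^(-1/2). *)
lemma abs_one_minus_powr_le:
  fixes a e :: real
  assumes a: "0 < a" and e: "0 < e" "e \<le> 1/2"
  shows "\<bar>1 - a powr (-e)\<bar> \<le> e * (4 * a powr (-3/4) + a)"
proof (cases "1 \<le> a")
  case True
  have "a powr (-e) \<le> 1"
    using powr_mono[of "-e" 0 a] True e by simp
  moreover have "1 - a powr (-e) \<le> e * ln a"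
    using exp_ge_add_one_self[of "-e * ln a"] a by (simp add: powr_def)
  moreover have "e * ln a \<le> e * a"
    using ln_le_minus_one[OF a] e by (intro mult_left_mono) auto
  moreover have "0 \<le> e * (4 * a powr (-3/4))"
    using e by simp
  ultimately show ?thesis
    by (simp add: algebra_simps)
next
  case False
  define u where "u = -e * ln a"
  have "u \<ge> 0"
    using False a e by (simp add: u_def mult_le_0_iff)
  have exp_u: "a powr (-e) = exp u"
    using a by (simp add: powr_def u_def)
  have "exp u * (1 - u) \<le> exp u * exp (-u)"
    using exp_ge_add_one_self[of "-u"] by (intro mult_left_mono) auto
  then have "exp u - 1 \<le> u * exp u"
    by (simp add: exp_minus algebra_simps)
  moreover have "- ln a \<le> 4 * a powr (-1/4)"
    using ln_le_minus_one[of "a powr (-1/4)"] a by (simp add: ln_powr)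
  moreover have "exp u \<le> a powr (-1/2)"
    using exp_u powr_mono'[of "-1/2" "-e" a] e a False by simp
  moreover have "u * exp u \<le> e * ((4 * a powr (-1/4)) * a powr (-1/2))"
  proof -
    have "(- ln a) * exp u \<le> (4 * a powr (-1/4)) * a powr (-1/2)"
      using calculation False a by (intro mult_mono) auto
    then have "e * ((- ln a) * exp u) \<le> e * ((4 * a powr (-1/4)) * a powr (-1/2))"
      using e by (intro mult_left_mono) auto
    then show ?thesis
      by (simp add: u_def)
  qed
  ultimately have "exp u - 1 \<le> e * (4 * (a powr (-1/4) * a powr (-1/2)))"
    by (simp add: mult.assoc)
  also have "a powr (-1/4) * a powr (-1/2) = a powr (-3/4)"
    by (simp add: powr_add[symmetric])
  also have "e * (4 * a powr (-3/4)) \<le> e * (4 * a powr (-3/4) + a)"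
    using e a by simp
  finally show ?thesis
    using exp_u \<open>u \<ge> 0\<close> by simp
qed

context
  fixes g :: "real \<Rightarrow> real" and B :: real
  assumes g_measurable [measurable]: "g \<in> borel_measurable borel"
    and g_nonneg: "\<And>y. 0 \<le> g y"
    and g_le: "\<And>y. g y \<le> B"
    and g_integrable: "integrable lborel g"
    and g_first_moment: "integrable lborel (\<lambda>y. g y * \<bar>y\<bar>)"
begin

lemma riesz_potential_integrand_le:
  assumes "p \<le> 0"
  shows "g y * \<bar>x - y\<bar> powr p \<le> B * (indicator {-1..1} (x - y) * \<bar>x - y\<bar> powr p) + g y"
proof (cases "\<bar>x - y\<bar> \<le> 1")
  case True
  then have "g y * \<bar>x - y\<bar> powr p \<le> B * \<bar>x - y\<bar> powr p"
    using g_le by (intro mult_right_mono) auto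
  then show ?thesis
    using True g_nonneg[of y] by (simp add: indicator_def abs_le_iff)
next
  case False
  then have "\<bar>x - y\<bar> powr p \<le> 1"
    using powr_mono[of p 0 "\<bar>x - y\<bar>"] False assms by (simp split: if_splits)
  then have "g y * \<bar>x - y\<bar> powr p \<le> g y"
    using g_nonneg[of y] by (simp add: mult_left_le)
  moreover have "x - y \<notin> {-1..1}"
    using False by auto
  ultimately show ?thesis
    by simp
qed

lemma integrable_riesz_potential_majorant:
  assumes "-1 < p"
  shows "integrable lborel (\<lambda>y. B * (indicator {-1..1} (x - y) * \<bar>x - y\<bar> powr p) + g y)"
  by (intro Bochner_Integration.integrable_add integrable_mult_right g_integrable
      integrable_shifted_abs_powr_on_unit_interval assms)

lemma integrable_riesz_potential:
  assumes "-1 < p" "p \<le> 0"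
  shows "integrable lborel (\<lambda>y. g y * \<bar>x - y\<bar> powr p)"
  by (rule Bochner_Integration.integrable_bound[OF integrable_riesz_potential_majorant[OF assms(1)]])
     (auto intro!: AE_I2 order_trans[OF riesz_potential_integrand_le[OF assms(2)] abs_ge_self]
       simp: g_nonneg)

lemma riesz_potential_le:
  assumes "-1 < p" "p \<le> 0"
  shows "riesz_potential g p x
    \<le> B * (LINT t|lborel. indicator {-1..1} t * \<bar>t\<bar> powr p) + integral\<^sup>L lborel g"
proof -
  have "riesz_potential g p x
      \<le> (LINT y|lborel. B * (indicator {-1..1} (x - y) * \<bar>x - y\<bar> powr p) + g y)"
    unfolding riesz_potential_def
    by (intro integral_mono integrable_riesz_potential integrable_riesz_potential_majorant
        riesz_potential_integrand_le assms)
  also have "\<dots> = B * (LINT t|lborel. indicator {-1..1} t * \<bar>t\<bar> powr p) + integral\<^sup>L lborel g"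
    using integrable_shifted_abs_powr_on_unit_interval[OF assms(1)] g_integrable
    by (simp add: integral_shifted_abs_powr_on_unit_interval)
  finally show ?thesis .
qed

lemma distance_weighted_le: "g y * \<bar>x - y\<bar> \<le> \<bar>x\<bar> * g y + g y * \<bar>y\<bar>"
proof -
  have "g y * \<bar>x - y\<bar> \<le> g y * (\<bar>x\<bar> + \<bar>y\<bar>)"
    using g_nonneg by (intro mult_left_mono abs_triangle_ineq4)
  then show ?thesis
    by (simp add: algebra_simps)
qed

lemma integrable_distance_weighted: "integrable lborel (\<lambda>y. g y * \<bar>x - y\<bar>)"
proof (rule Bochner_Integration.integrable_bound)
  show "integrable lborel (\<lambda>y. \<bar>x\<bar> * g y + g y * \<bar>y\<bar>)"
    by (intro Bochner_Integration.integrable_add integrable_mult_right g_integrable g_first_moment)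
  show "AE y in lborel. norm (g y * \<bar>x - y\<bar>) \<le> norm (\<bar>x\<bar> * g y + g y * \<bar>y\<bar>)"
    using distance_weighted_le g_nonneg by (intro AE_I2) (simp add: abs_mult)
qed simp

lemma integral_distance_weighted_le:
  "(LINT y|lborel. g y * \<bar>x - y\<bar>) \<le> \<bar>x\<bar> * integral\<^sup>L lborel g + (LINT y|lborel. g y * \<bar>y\<bar>)"
proof -
  have "(LINT y|lborel. g y * \<bar>x - y\<bar>) \<le> (LINT y|lborel. \<bar>x\<bar> * g y + g y * \<bar>y\<bar>)"
    by (intro integral_mono integrable_distance_weighted Bochner_Integration.integrable_add
        integrable_mult_right g_integrable g_first_moment distance_weighted_le)
  also have "\<dots> = \<bar>x\<bar> * integral\<^sup>L lborel g + (LINT y|lborel. g y * \<bar>y\<bar>)"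
    using g_integrable g_first_moment by simp
  finally show ?thesis .
qed

lemma abs_minus_riesz_integrand_le:
  assumes "y \<noteq> x" "0 < e" "e \<le> 1/2"
  shows "\<bar>g y - g y * \<bar>x - y\<bar> powr (-e)\<bar> \<le> e * (4 * (g y * \<bar>x - y\<bar> powr (-3/4)) + g y * \<bar>x - y\<bar>)"
proof -
  have "\<bar>g y - g y * \<bar>x - y\<bar> powr (-e)\<bar> = g y * \<bar>1 - \<bar>x - y\<bar> powr (-e)\<bar>"
    using g_nonneg[of y] by (metis abs_mult abs_of_nonneg mult.right_neutral right_diff_distrib)
  also have "\<dots> \<le> g y * (e * (4 * \<bar>x - y\<bar> powr (-3/4) + \<bar>x - y\<bar>))"
    using assms g_nonneg[of y] by (intro mult_left_mono abs_one_minus_powr_le) auto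
  finally show ?thesis
    by (simp add: algebra_simps)
qed

lemma abs_integral_minus_riesz_potential_le:
  assumes e: "0 < e" "e \<le> 1/2"
  shows "\<bar>integral\<^sup>L lborel g - riesz_potential g (-e) x\<bar>
    \<le> e * (4 * riesz_potential g (-3/4) x + (LINT y|lborel. g y * \<bar>x - y\<bar>))"
proof -
  have "\<bar>integral\<^sup>L lborel g - riesz_potential g (-e) x\<bar>
      \<le> (LINT y|lborel. \<bar>g y - g y * \<bar>x - y\<bar> powr (-e)\<bar>)"
    using g_integrable integrable_riesz_potential[of "-e" x] e
    by (simp add: riesz_potential_def flip: Bochner_Integration.integral_diff)
  also have "\<dots> \<le> (LINT y|lborel. e * (4 * (g y * \<bar>x - y\<bar> powr (-3/4)) + g y * \<bar>x - y\<bar>))"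
  proof (rule integral_mono_AE)
    show "integrable lborel (\<lambda>y. \<bar>g y - g y * \<bar>x - y\<bar> powr (-e)\<bar>)"
      using g_integrable integrable_riesz_potential[of "-e" x] e by auto
    show "integrable lborel (\<lambda>y. e * (4 * (g y * \<bar>x - y\<bar> powr (-3/4)) + g y * \<bar>x - y\<bar>))"
      by (intro integrable_mult_right Bochner_Integration.integrable_add integrable_riesz_potential
          integrable_distance_weighted) auto
    show "AE y in lborel. \<bar>g y - g y * \<bar>x - y\<bar> powr (-e)\<bar>
        \<le> e * (4 * (g y * \<bar>x - y\<bar> powr (-3/4)) + g y * \<bar>x - y\<bar>)"
      using AE_lborel_singleton[of x] by eventually_elim (use e abs_minus_riesz_integrand_le in auto)
  qed
  also have "\<dots> = e * (4 * riesz_potential g (-3/4) x + (LINT y|lborel. g y * \<bar>x - y\<bar>))"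
    using integrable_riesz_potential[of "-3/4" x] integrable_distance_weighted[of x]
    by (simp add: riesz_potential_def)
  finally show ?thesis .
qed

lemma integral_minus_riesz_potential_le:
  obtains K where "\<And>x e. 0 < e \<Longrightarrow> e \<le> 1/2 \<Longrightarrow>
    \<bar>integral\<^sup>L lborel g - riesz_potential g (-e) x\<bar> \<le> e * K * (1 + \<bar>x\<bar>)"
proof -
  define H where "H = (LINT t|lborel. indicator {-1..1} t * \<bar>t\<bar> powr (-3/4::real))"
  define I where "I = integral\<^sup>L lborel g"
  define M where "M = (LINT y|lborel. g y * \<bar>y\<bar>)"
  have "0 \<le> B * H" "0 \<le> I" "0 \<le> M"
    using order_trans[OF g_nonneg g_le] g_nonneg
    by (auto simp: H_def I_def M_def intro!: integral_nonneg_AE)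
  have "\<bar>I - riesz_potential g (-e) x\<bar> \<le> e * (4 * (B * H + I) + I + M) * (1 + \<bar>x\<bar>)"
    if e: "0 < e" "e \<le> 1/2" for x e
  proof -
    have "\<bar>I - riesz_potential g (-e) x\<bar>
        \<le> e * (4 * riesz_potential g (-3/4) x + (LINT y|lborel. g y * \<bar>x - y\<bar>))"
      unfolding I_def by (rule abs_integral_minus_riesz_potential_le[OF e])
    also have "\<dots> \<le> e * (4 * (B * H + I) + (\<bar>x\<bar> * I + M))"
      using riesz_potential_le[of "-3/4" x] integral_distance_weighted_le[of x] e
      by (intro mult_left_mono add_mono) (auto simp: H_def I_def M_def)
    also have "\<dots> \<le> e * ((4 * (B * H + I) + I + M) * (1 + \<bar>x\<bar>))"
      using \<open>0 \<le> B * H\<close> \<open>0 \<le> I\<close> \<open>0 \<le> M\<close> e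
        mult_nonneg_nonneg[of "\<bar>x\<bar>" "4 * (B * H + I) + M"]
      by (intro mult_left_mono) (auto simp: algebra_simps)
    finally show ?thesis
      by (simp only: mult.assoc)
  qed
  then show thesis
    using that[of "4 * (B * H + I) + I + M"] by (simp add: I_def)
qed

lemma riesz_potential_ge:
  assumes one_le_g: "\<And>y. y \<in> {0..1} \<Longrightarrow> 1 \<le> g y" and p: "-1 < p" "p \<le> 0"
  shows "(1 + \<bar>x\<bar>) powr p \<le> riesz_potential g p x"
proof -
  have "(1 + \<bar>x\<bar>) powr p = (LINT y|lborel. indicator {0..1} (y::real) * (1 + \<bar>x\<bar>) powr p)"
    by (simp add: measure_lborel_Icc)
  also have "\<dots> \<le> riesz_potential g p x"
    unfolding riesz_potential_def
  proof (rule integral_mono_AE)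
    show "integrable lborel (\<lambda>y. indicator {0..1::real} y * (1 + \<bar>x\<bar>) powr p)"
      by (intro integrable_mult_left integrable_real_indicator) (auto simp: emeasure_lborel_Icc)
    show "integrable lborel (\<lambda>y. g y * \<bar>x - y\<bar> powr p)"
      using p by (rule integrable_riesz_potential)
    show "AE y in lborel. indicator {0..1} y * (1 + \<bar>x\<bar>) powr p \<le> g y * \<bar>x - y\<bar> powr p"
      using AE_lborel_singleton[of x]
    proof eventually_elim
      case (elim y)
      show ?case
      proof (cases "y \<in> {0..1}")
        case True
        then have "(1 + \<bar>x\<bar>) powr p \<le> \<bar>x - y\<bar> powr p"
          using elim p by (intro powr_mono2') auto
        also have "\<dots> \<le> g y * \<bar>x - y\<bar> powr p"
          using one_le_g[OF True] by (simp add: mult_le_cancel_right1)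
        finally show ?thesis
          using True by simp
      qed (simp add: g_nonneg)
    qed
  qed
  finally show ?thesis .
qed

end

lemma w0_sq_eq: "(w0 x)^2 = 4 / (1 + x^2)^2"
  by (simp add: w0_def power_divide)

lemma w0_measurable [measurable]: "w0 \<in> borel_measurable borel"
  unfolding w0_def by measurable

lemma w0_sq_le_four: "(w0 x)^2 \<le> 4"
proof -
  have "1 \<le> (1 + x^2)^2"
    by (simp add: one_le_power)
  then show ?thesis
    by (simp add: w0_sq_eq divide_le_eq)
qed

lemma one_le_w0_sq: "\<bar>x\<bar> \<le> 1 \<Longrightarrow> 1 \<le> (w0 x)^2"
proof -
  assume "\<bar>x\<bar> \<le> 1"
  then have "x^2 \<le> 1"
    by (simp add: abs_square_le_1)
  then have "1 \<le> w0 x"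
    by (simp add: w0_def le_divide_eq add_pos_nonneg)
  then show ?thesis
    by (simp add: one_le_power)
qed

lemma w0_sq_le_inverse: "(w0 x)^2 \<le> 4 * inverse (1 + x^2)"
proof -
  have "(w0 x)^2 \<le> 4 / (1 + x^2)"
    unfolding w0_sq_eq
    by (rule divide_left_mono) (auto simp: power2_eq_square add_pos_nonneg)
  then show ?thesis
    by (simp add: divide_inverse)
qed

lemma w0_sq_abs_le_inverse: "(w0 x)^2 * \<bar>x\<bar> \<le> 2 * inverse (1 + x^2)"
proof -
  have pos: "0 < 1 + x^2"
    by (simp add: add_pos_nonneg)
  have "(w0 x)^2 * \<bar>x\<bar> = 4 * \<bar>x\<bar> / (1 + x^2)^2"
    by (simp add: w0_sq_eq)
  also have "\<dots> \<le> 2 * (1 + x^2) / (1 + x^2)^2"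
    using sum_squares_bound[of "\<bar>x\<bar>" 1] by (intro divide_right_mono) auto
  also have "\<dots> = 2 * inverse (1 + x^2)"
  proof -
    have "2 * q / q^2 = 2 * inverse q" if "q \<noteq> 0" for q :: real
      using that by (simp add: power2_eq_square field_simps)
    from this[of "1 + x^2"] show ?thesis
      using pos by simp
  qed
  finally show ?thesis .
qed

lemma integrable_w0_sq: "integrable lborel (\<lambda>x. (w0 x)^2)"
  by (rule Bochner_Integration.integrable_bound[OF
        integrable_mult_right[OF integrable_inverse_one_plus_square, of 4]])
     (auto intro!: AE_I2 simp: w0_sq_le_inverse)

lemma integrable_w0_sq_first_moment: "integrable lborel (\<lambda>x. (w0 x)^2 * \<bar>x\<bar>)"
  by (rule Bochner_Integration.integrable_bound[OF
        integrable_mult_right[OF integrable_inverse_one_plus_square, of 2]])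
     (auto intro!: AE_I2 simp: w0_sq_abs_le_inverse)

lemma weighted_w0_sq_le: "(1 + \<bar>x\<bar>)^4 * (w0 x)^2 \<le> 16"
proof -
  have "(1 + \<bar>x\<bar>)^2 \<le> 2 * (1 + x^2)"
    using sum_squares_bound[of "\<bar>x\<bar>" 1] by (simp add: power2_eq_square algebra_simps)
  then have "((1 + \<bar>x\<bar>)^2)^2 \<le> (2 * (1 + x^2))^2"
    by (intro power_mono) auto
  then have "(1 + \<bar>x\<bar>)^4 \<le> 4 * (1 + x^2)^2"
    by (simp only: power_mult_distrib flip: power_mult) simp
  then have "(1 + \<bar>x\<bar>)^4 * (w0 x)^2 \<le> 4 * (1 + x^2)^2 * (w0 x)^2"
    by (intro mult_right_mono) auto
  also have "\<dots> = 16"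
    by (simp add: w0_sq_eq add_nonneg_eq_0_iff)
  finally show ?thesis .
qed

lemma riesz_potential_w0_sq_ge:
  assumes "-1 < p" "p \<le> 0"
  shows "(1 + \<bar>x\<bar>) powr p \<le> riesz_potential (\<lambda>y. (w0 y)^2) p x"
  by (rule riesz_potential_ge[OF _ zero_le_power2 w0_sq_le_four integrable_w0_sq
        integrable_w0_sq_first_moment one_le_w0_sq assms]) auto

lemma cG_pos: "0 < s \<Longrightarrow> s < 1/2 \<Longrightarrow> 0 < cG s"
  unfolding cG_def by (intro divide_pos_pos mult_pos_pos Gamma_real_pos sin_gt_zero) auto

lemma v_w_eq_riesz_potential:
  assumes "0 < s" "s < 1/2"
  shows "v_w s x = riesz_potential (\<lambda>y. (w0 y)^2) (2 * s - 1) x / (LINT y|lborel. (w0 y)^2)"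
proof -
  have "v_w s x = tau s * (cG s * riesz_potential (\<lambda>y. (w0 y)^2) (2 * s - 1) x)"
    unfolding v_w_def Gker_def riesz_potential_def by (simp add: mult.left_commute)
  then show ?thesis
    using cG_pos[OF assms] by (simp add: tau_def field_simps)
qed

lemma abs_Sw_le:
  fixes s x :: real
  assumes "0 < s" "s < 1/2"
  shows "\<bar>Sw s x\<bar>
    \<le> (w0 x)^2 * \<bar>(LINT y|lborel. (w0 y)^2) - riesz_potential (\<lambda>y. (w0 y)^2) (2 * s - 1) x\<bar>
       * (1 + \<bar>x\<bar>) powr (1 - 2 * s)"
proof -
  define I where "I = (LINT y|lborel. (w0 y)^2)"
  define J where "J = riesz_potential (\<lambda>y. (w0 y)^2) (2 * s - 1) x"
  define X where "X = 1 + \<bar>x\<bar>"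
  have J_ge: "X powr (2 * s - 1) \<le> J"
    unfolding J_def X_def using assms by (intro riesz_potential_w0_sq_ge) auto
  moreover have X_powr_pos: "0 < X powr (2 * s - 1)"
    by (simp add: X_def)
  ultimately have "0 < J"
    by linarith
  have "w / (j / i) - w = w * (i - j) / j" if "j \<noteq> 0" for w i j :: real
    using that by (simp add: field_simps)
  with \<open>0 < J\<close> have "Sw s x = (w0 x)^2 * (I - J) / J"
    using assms by (simp add: Sw_def v_w_eq_riesz_potential I_def J_def)
  then have "\<bar>Sw s x\<bar> = (w0 x)^2 * \<bar>I - J\<bar> * (1 / J)"
    using \<open>0 < J\<close> by (simp add: abs_mult abs_divide)
  also have "1 / J \<le> 1 / X powr (2 * s - 1)"
    using mult_pos_pos[OF \<open>0 < J\<close> X_powr_pos] by (rule divide_left_mono[OF J_ge zero_le_one])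
  also have "\<dots> = X powr (1 - 2 * s)"
    by (simp add: powr_minus_divide[symmetric])
  finally show ?thesis
    by (simp add: I_def J_def X_def mult_left_mono)
qed

lemma weighted_Sw_le:
  obtains K where "0 \<le> K"
    and "\<And>s x. 1/4 \<le> s \<Longrightarrow> s < 1/2 \<Longrightarrow> (1 + \<bar>x\<bar>)^2 * \<bar>Sw s x\<bar> \<le> K * (1 - 2 * s)"
proof -
  obtain K where K: "\<And>x e. 0 < e \<Longrightarrow> e \<le> 1/2 \<Longrightarrow>
      \<bar>(LINT y|lborel. (w0 y)^2) - riesz_potential (\<lambda>y. (w0 y)^2) (-e) x\<bar> \<le> e * K * (1 + \<bar>x\<bar>)"
    by (rule integral_minus_riesz_potential_le[of "\<lambda>y. (w0 y)^2" 4])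
       (auto simp: w0_sq_le_four integrable_w0_sq integrable_w0_sq_first_moment)
  have "0 \<le> 1/2 * K * (1 + \<bar>0\<bar>)"
    using K[of "1/2" 0] by (rule order_trans[OF abs_ge_zero]) simp_all
  then have "0 \<le> K"
    by simp
  have "(1 + \<bar>x\<bar>)^2 * \<bar>Sw s x\<bar> \<le> 16 * K * (1 - 2 * s)" if s: "1/4 \<le> s" "s < 1/2" for s x
  proof -
    define e where "e = 1 - 2 * s"
    define X where "X = 1 + \<bar>x\<bar>"
    have e: "0 < e" "e \<le> 1/2"
      using s by (auto simp: e_def)
    have "1 \<le> X"
      by (simp add: X_def)
    have "2 * s - 1 = -e"
      by (simp add: e_def)
    then have "\<bar>Sw s x\<bar> \<le> (w0 x)^2 * \<bar>(LINT y|lborel. (w0 y)^2) - riesz_potential (\<lambda>y. (w0 y)^2) (-e) x\<bar>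
        * X powr e"
      using abs_Sw_le[of s x] s unfolding X_def e_def by simp
    also have "\<dots> \<le> (w0 x)^2 * (e * K * X) * X powr e"
      using K[OF e, of x] by (intro mult_right_mono mult_left_mono) (auto simp: X_def)
    also have "\<dots> \<le> (w0 x)^2 * (e * K * X) * X"
      using powr_mono[of e 1 X] \<open>1 \<le> X\<close> e \<open>0 \<le> K\<close> by (intro mult_left_mono) auto
    finally have "X^2 * \<bar>Sw s x\<bar> \<le> X^2 * ((w0 x)^2 * (e * K * X) * X)"
      by (intro mult_left_mono) auto
    also have "\<dots> = (X^4 * (w0 x)^2) * (e * K)"
      by (simp add: power2_eq_square power4_eq_xxxx)
    also have "\<dots> \<le> 16 * (e * K)"
      using weighted_w0_sq_le[of x] e \<open>0 \<le> K\<close> by (intro mult_right_mono) (auto simp: X_def)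
    finally show ?thesis
      by (simp add: X_def e_def mult_ac)
  qed
  then show thesis
    using that[of "16 * K"] \<open>0 \<le> K\<close> by simp
qed

theorem lemma6p5:
  shows "\<forall>\<delta>::real. \<delta> > 0 \<longrightarrow> (\<exists>C::real. \<exists>\<epsilon>::real. \<epsilon> > 0 \<and>
     (\<forall>s::real. 0 < s \<and> s < 1/2 \<and> 1 - 2 * s < \<epsilon> \<longrightarrow>
        (\<forall>x::real. (1 + \<bar>x\<bar>)\<^sup>2 * \<bar>Sw s x\<bar> \<le> C * (1 - 2 * s) powr (1 - \<delta>))))"
proof (intro allI impI)
  fix \<delta> :: real
  assume "\<delta> > 0"
  obtain K where "0 \<le> K"
    and K: "\<And>s x. 1/4 \<le> s \<Longrightarrow> s < 1/2 \<Longrightarrow> (1 + \<bar>x\<bar>)^2 * \<bar>Sw s x\<bar> \<le> K * (1 - 2 * s)"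
    using weighted_Sw_le by blast
  have "(1 + \<bar>x\<bar>)^2 * \<bar>Sw s x\<bar> \<le> K * (1 - 2 * s) powr (1 - \<delta>)"
    if "s < 1/2" "1 - 2 * s < 1/2" for s x
  proof -
    have "1 - 2 * s \<le> (1 - 2 * s) powr (1 - \<delta>)"
      using powr_mono'[of "1 - \<delta>" 1 "1 - 2 * s"] that \<open>\<delta> > 0\<close> by simp
    then have "K * (1 - 2 * s) \<le> K * (1 - 2 * s) powr (1 - \<delta>)"
      using \<open>0 \<le> K\<close> by (rule mult_left_mono)
    then show ?thesis
      using K[of s x] that by linarith
  qed
  then show "\<exists>C \<epsilon>. \<epsilon> > 0 \<and> (\<forall>s. 0 < s \<and> s < 1/2 \<and> 1 - 2 * s < \<epsilon> \<longrightarrow>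
      (\<forall>x. (1 + \<bar>x\<bar>)\<^sup>2 * \<bar>Sw s x\<bar> \<le> C * (1 - 2 * s) powr (1 - \<delta>)))"
    by (intro exI[of _ K] exI[of _ "1/2"]) auto
qed

end
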